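(* Let $\mu$ be a probability measure on $\mathbb{R}^d$, $\nu=\sum_{i=1}^M w_i\delta_{y_i}$ with $w_i>0$, $\sum_iw_i=1$, $w_{\min}=\min_iw_i$, and $c:\mathbb{R}^d\times\mathbb{R}^d\to[0,\infty)$ a cost. Assume the semi-dual objective $H$ admits a minimizer, and let $K$ be a compact set with $\mu(K)\ge1-\frac12 w_{\min}$, with associated projection set $\mathcal C$, and let $\mathbf g^*\in\mathcal C$ be a minimizer of $H$. Run PSGD with step sizes $\gamma_k=\gamma_1/k^{b}$, where $b=1/2$ and $\gamma_1=\mathrm{Diam}(\mathcal C)/(2\sqrt2)$. Then for every $n\ge1$, $$\mathbb{E}\big[H(\bar{\mathbf g}_n)-H(\mathbf g^* )\big]\le \frac{4\sqrt2\,\mathrm{Diam}(\mathcal C)}{\sqrt n}.$$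
   Context: For $\mathbf g\in\mathbb{R}^M$: $\mathbf g^c(x)=\min_i\{c(x,y_i)-g_i\}$; Laguerre cells $\mathbb L_j(\mathbf g)=\{x:\mathbf g^c(x)=c(x,y_j)-g_j\}$; $h(\mathbf g,x)=-\mathbf g^c(x)-\sum_jw_jg_j$; $H(\mathbf g)=\mathbb{E}_{X\sim\mu}[h(\mathbf g,X)]$. Projection set: $\|c\|_{K,\infty}=\sup_{x\in K,j}|c(x,y_j)|$, $\mathcal C=\{\mathbf g\in\mathbb{R}^M:|g_j|\le\|c\|_{K,\infty}\ \forall j\}$, $\mathrm{Proj}_{\mathcal C}$ the Euclidean projection onto $\mathcal C$, and $\mathrm{Diam}(\mathcal C)$ its Euclidean diameter. PSGD: given $\gamma_1>0$, $b$, i.i.d. samples $X_1,X_2,\dots\sim\mu$, start from $\mathbf g_0\in\mathcal C$ and for $k\ge1$ set $\mathbf g_k=\mathrm{Proj}_{\mathcal C}\big(\mathbf g_{k-1}-\gamma_k\,\partial_{\mathbf g}h(\mathbf g_{k-1},X_k)\big)$, $\gamma_k=\gamma_1k^{-b}$, where $\partial_{\mathbf g}h(\mathbf g,x)_j=\mathbf 1_{x\in\mathbb L_j(\mathbf g)}-w_j$ (a point lying in several cells is assigned to one of them by a fixed rule); the averaged iterate is $\bar{\mathbf g}_n=\frac1{n+1}\sum_{k=0}^n\mathbf g_k$. *)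

theory Defs
  imports "HOL-Probability.Probability"
begin

text \<open>Semi-discrete OT. Target points are indexed by a finite type 'm (so M = CARD('m)),
  dual vectors g live in real^'m (Euclidean space R^M).\<close>

definition c_transform :: "('a \<Rightarrow> 'a \<Rightarrow> real) \<Rightarrow> ('m::finite \<Rightarrow> 'a) \<Rightarrow> real^'m \<Rightarrow> 'a \<Rightarrow> real" where
  "c_transform c y g x = Min ((\<lambda>i. c x (y i) - g $ i) ` UNIV)"

definition laguerre_cell :: "('a \<Rightarrow> 'a \<Rightarrow> real) \<Rightarrow> ('m::finite \<Rightarrow> 'a) \<Rightarrow> real^'m \<Rightarrow> 'm \<Rightarrow> 'a set" where
  "laguerre_cell c y g j = {x. c_transform c y g x = c x (y j) - g $ j}"

definition h_fun :: "('a \<Rightarrow> 'a \<Rightarrow> real) \<Rightarrow> ('m::finite \<Rightarrow> 'a) \<Rightarrow> real^'m \<Rightarrow> real^'m \<Rightarrow> 'a \<Rightarrow> real" where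
  "h_fun c y w g x = - c_transform c y g x - (\<Sum>j\<in>UNIV. w $ j * g $ j)"

definition H_fun :: "'a measure \<Rightarrow> ('a \<Rightarrow> 'a \<Rightarrow> real) \<Rightarrow> ('m::finite \<Rightarrow> 'a) \<Rightarrow> real^'m \<Rightarrow> real^'m \<Rightarrow> real" where
  "H_fun mu c y w g = (\<integral>x. h_fun c y w g x \<partial>mu)"

definition cost_sup :: "('a \<Rightarrow> 'a \<Rightarrow> real) \<Rightarrow> ('m::finite \<Rightarrow> 'a) \<Rightarrow> 'a set \<Rightarrow> real" where
  "cost_sup c y K = (SUP p \<in> K \<times> (UNIV::'m set). \<bar>c (fst p) (y (snd p))\<bar>)"

definition proj_set :: "('a \<Rightarrow> 'a \<Rightarrow> real) \<Rightarrow> ('m::finite \<Rightarrow> 'a) \<Rightarrow> 'a set \<Rightarrow> (real^'m) set" where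
  "proj_set c y K = {g. \<forall>j. \<bar>g $ j\<bar> \<le> cost_sup c y K}"

text \<open>Stochastic subgradient; assign g x is the (fixed-rule) chosen cell index of x.\<close>
definition sgrad :: "(real^'m \<Rightarrow> 'a \<Rightarrow> 'm::finite) \<Rightarrow> real^'m \<Rightarrow> real^'m \<Rightarrow> 'a \<Rightarrow> real^'m" where
  "sgrad assign w g x = (\<chi> j. (if assign g x = j then 1 else 0) - w $ j)"

text \<open>PSGD iterates g_k driven by the sample sequence xs (xs k = X_k, k >= 1),
  step gamma_k = gamma1 * k powr (-b).\<close>
primrec psgd :: "(real^'m \<Rightarrow> 'a \<Rightarrow> 'm::finite) \<Rightarrow> real^'m \<Rightarrow> (real^'m) set \<Rightarrow> real^'m
    \<Rightarrow> real \<Rightarrow> real \<Rightarrow> (nat \<Rightarrow> 'a) \<Rightarrow> nat \<Rightarrow> real^'m" where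
  "psgd assign w C g0 gamma1 b xs 0 = g0"
| "psgd assign w C g0 gamma1 b xs (Suc k) =
     closest_point C (psgd assign w C g0 gamma1 b xs k
       - (gamma1 * real (Suc k) powr (- b)) *\<^sub>R sgrad assign w (psgd assign w C g0 gamma1 b xs k) (xs (Suc k)))"

definition psgd_avg :: "(real^'m \<Rightarrow> 'a \<Rightarrow> 'm::finite) \<Rightarrow> real^'m \<Rightarrow> (real^'m) set \<Rightarrow> real^'m
    \<Rightarrow> real \<Rightarrow> real \<Rightarrow> (nat \<Rightarrow> 'a) \<Rightarrow> nat \<Rightarrow> real^'m" where
  "psgd_avg assign w C g0 gamma1 b xs n =
     (1 / real (n + 1)) *\<^sub>R (\<Sum>k\<in>{0..n}. psgd assign w C g0 gamma1 b xs k)"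

end

theory Submission
  imports Defs
begin

(* For each x, the map g |-> h(g, x) is convex, and e_j - w is a subgradient of it at g whenever x
   lies in the Laguerre cell L_j(g); as w is a probability vector, these subgradients have norm at
   most sqrt 2. Let s_k be the subgradient used in the step from g_k to g_(k+1) and D = Diam C.
   Since the projection onto C is nonexpansive, the squared distances |g_k - gstar|^2 telescope and
   give the deterministic regret bound
     sum_(k<N) <s_k, g_k - gstar> <= (D^2 / (2 gamma_1) + 2 gamma_1) sqrt N = (3/2) sqrt 2 D sqrt N.
   The iterate g_k depends only on X_1, ..., X_k, hence is independent of X_(k+1), so that
   E[H(g_k) - H(gstar)] = E[h(g_k, X_(k+1)) - h(gstar, X_(k+1))] <= E <s_k, g_k - gstar>. Jensen's
   inequality for the convex H turns this into the bound 2 sqrt 2 D / sqrt (n + 1) for the average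
   of g_0, ..., g_n. *)

section \<open>The semi-dual integrand\<close>

lemma c_transform_le: "c_transform c y g x \<le> c x (y j) - g $ j"
  unfolding c_transform_def by (rule Min_le) auto

lemma ex_laguerre_cell: "\<exists>j. x \<in> laguerre_cell c y g j"
proof -
  have "c_transform c y g x \<in> (\<lambda>i. c x (y i) - g $ i) ` UNIV"
    unfolding c_transform_def by (rule Min_in) auto
  then show ?thesis by (auto simp: laguerre_cell_def)
qed

lemma h_fun_eq: "h_fun c y w g x = - c_transform c y g x - w \<bullet> g"
  by (simp add: h_fun_def inner_vec_def)

lemma h_fun_subgradient:
  assumes "x \<in> laguerre_cell c y g j"
  shows "h_fun c y w g x + (axis j 1 - w) \<bullet> (g' - g) \<le> h_fun c y w g' x"
  using assms c_transform_le[of c y g' x j]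
  by (simp add: h_fun_eq laguerre_cell_def inner_diff_left inner_diff_right inner_axis')

lemma sgrad_eq_axis: "sgrad assign w g x = axis (assign g x) 1 - w"
  by (simp add: sgrad_def vec_eq_iff axis_def)

lemma convex_on_h_fun:
  fixes w :: "real^'m::finite"
  shows "convex_on UNIV (\<lambda>g. h_fun c y w g x)"
proof (rule convex_onI)
  fix t :: real and a b :: "real^'m"
  assume t: "0 < t" "t < 1"
  define z where "z = (1 - t) *\<^sub>R a + t *\<^sub>R b"
  obtain j where "x \<in> laguerre_cell c y z j"
    using ex_laguerre_cell[of x c y z] by blast
  then have "h_fun c y w z x + (axis j 1 - w) \<bullet> (a - z) \<le> h_fun c y w a x"
    and "h_fun c y w z x + (axis j 1 - w) \<bullet> (b - z) \<le> h_fun c y w b x"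
    by (auto intro: h_fun_subgradient)
  with t have "(1 - t) * (h_fun c y w z x + (axis j 1 - w) \<bullet> (a - z))
      + t * (h_fun c y w z x + (axis j 1 - w) \<bullet> (b - z))
      \<le> (1 - t) * h_fun c y w a x + t * h_fun c y w b x"
    by (intro add_mono mult_left_mono) auto
  moreover have "(1 - t) *\<^sub>R (a - z) + t *\<^sub>R (b - z) = 0"
    by (simp add: z_def algebra_simps)
  then have "(1 - t) * ((axis j 1 - w) \<bullet> (a - z)) + t * ((axis j 1 - w) \<bullet> (b - z)) = 0"
    by (metis inner_add_right inner_scaleR_right inner_zero_right)
  ultimately show "h_fun c y w z x \<le> (1 - t) * h_fun c y w a x + t * h_fun c y w b x"
    by (simp add: algebra_simps)
qed simp

lemma norm_axis_minus_prob_vector_le: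
  fixes w :: "real^'m::finite"
  assumes w_nonneg: "\<forall>i. 0 \<le> w $ i" and w_sum: "(\<Sum>i\<in>UNIV. w $ i) = 1"
  shows "norm (axis j 1 - w) \<le> sqrt 2"
proof (rule real_le_rsqrt)
  have w_le_1: "w $ i \<le> 1" for i
    using member_le_sum[of i UNIV "\<lambda>i. w $ i"] w_nonneg w_sum by simp
  have "w \<bullet> w = (\<Sum>i\<in>UNIV. w $ i * w $ i)" by (simp add: inner_vec_def)
  also have "\<dots> \<le> (\<Sum>i\<in>UNIV. w $ i)"
    using w_nonneg w_le_1 by (intro sum_mono) (simp add: mult_left_le)
  finally have "w \<bullet> w \<le> 1" using w_sum by simp
  then show "(norm (axis j 1 - w))\<^sup>2 \<le> 2"
    using w_nonneg[rule_format, of j]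
    by (simp add: power2_norm_eq_inner inner_diff_left inner_diff_right inner_axis' inner_axis inner_commute)
qed

lemma h_fun_lipschitz:
  fixes w :: "real^'m::finite"
  assumes "\<forall>i. 0 \<le> w $ i" and "(\<Sum>i\<in>UNIV. w $ i) = 1"
  shows "\<bar>h_fun c y w g x - h_fun c y w g' x\<bar> \<le> sqrt 2 * norm (g - g')"
proof -
  have "h_fun c y w g x - h_fun c y w g' x \<le> sqrt 2 * norm (g - g')" for g g' :: "real^'m"
  proof -
    obtain j where "x \<in> laguerre_cell c y g j"
      using ex_laguerre_cell[of x c y g] by blast
    then have "h_fun c y w g x - h_fun c y w g' x \<le> (axis j 1 - w) \<bullet> (g - g')"
      using h_fun_subgradient[of x c y g j w g'] by (simp add: inner_diff_right)
    also have "\<dots> \<le> norm (axis j 1 - w) * norm (g - g')"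
      by (rule norm_cauchy_schwarz)
    also have "\<dots> \<le> sqrt 2 * norm (g - g')"
      using assms by (intro mult_right_mono norm_axis_minus_prob_vector_le) auto
    finally show ?thesis .
  qed
  from this[of g g'] this[of g' g] show ?thesis
    by (simp add: norm_minus_commute abs_le_iff)
qed

section \<open>Regret of projected subgradient descent\<close>

lemma sum_diff_mult_incseq_le:
  fixes d t :: "nat \<Rightarrow> real"
  assumes "\<And>k. 0 \<le> d k" "\<And>k. d k \<le> B" "0 \<le> t 0" "\<And>k. t k \<le> t (Suc k)"
  shows "(\<Sum>k<N. (d k - d (Suc k)) * t (Suc k)) \<le> (B - d N) * t N"
proof (induction N)
  case 0 then show ?case using assms by simp
next
  case (Suc N)
  have "(B - d N) * t N \<le> (B - d N) * t (Suc N)"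
    using assms by (intro mult_left_mono) auto
  then show ?case using Suc by (simp add: algebra_simps)
qed

lemma sum_inverse_sqrt_le: "(\<Sum>k<N. 1 / sqrt (real (Suc k))) \<le> 2 * sqrt (real N)"
proof (induction N)
  case 0 then show ?case by simp
next
  case (Suc N)
  have "1 = (sqrt (Suc N) - sqrt N) * (sqrt (Suc N) + sqrt N)"
    by (simp add: algebra_simps)
  also have "\<dots> \<le> (sqrt (Suc N) - sqrt N) * (2 * sqrt (Suc N))"
    by (intro mult_left_mono) auto
  finally have "1 / sqrt (Suc N) \<le> 2 * (sqrt (Suc N) - sqrt N)"
    by (simp add: field_simps)
  then show ?case using Suc by simp
qed

lemma projected_subgradient_regret:
  fixes g s :: "nat \<Rightarrow> 'v::real_inner"
  assumes dist_le: "\<And>k. norm (g k - z) \<le> D"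
    and grad_le: "\<And>k. norm (s k) \<le> L"
    and gam: "0 < gam"
    and step: "\<And>k. norm (g (Suc k) - z) \<le> norm (g k - (gam / sqrt (Suc k)) *\<^sub>R s k - z)"
  shows "(\<Sum>k<N. s k \<bullet> (g k - z)) \<le> (D\<^sup>2 / (2 * gam) + gam * L\<^sup>2) * sqrt N"
proof -
  define d where "d k = (norm (g k - z))\<^sup>2" for k
  have d_nonneg: "0 \<le> d k" and d_le: "d k \<le> D\<^sup>2" for k
    unfolding d_def using dist_le[of k] by (auto intro: power_mono)
  have regret_step: "s k \<bullet> (g k - z)
      \<le> (d k - d (Suc k)) * sqrt (Suc k) / (2 * gam) + gam * L\<^sup>2 / (2 * sqrt (Suc k))" for k
  proof -
    define r where "r = gam / sqrt (Suc k)"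
    have r: "0 < r" using gam by (simp add: r_def)
    have "d (Suc k) \<le> (norm ((g k - z) - r *\<^sub>R s k))\<^sup>2"
      unfolding d_def using step[of k] by (intro power_mono) (auto simp: r_def algebra_simps)
    also have "\<dots> = d k - 2 * r * (s k \<bullet> (g k - z)) + r\<^sup>2 * (norm (s k))\<^sup>2"
      unfolding d_def power2_norm_eq_inner
      by (simp add: inner_diff_left inner_diff_right inner_commute algebra_simps power2_eq_square)
    also have "\<dots> \<le> d k - 2 * r * (s k \<bullet> (g k - z)) + r\<^sup>2 * L\<^sup>2"
      using grad_le[of k] by (intro add_left_mono mult_left_mono power_mono) auto
    finally have "s k \<bullet> (g k - z) \<le> (d k - d (Suc k)) / (2 * r) + r * L\<^sup>2 / 2"
      using r by (simp add: field_simps power2_eq_square)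
    then show ?thesis by (simp add: r_def)
  qed
  have "(\<Sum>k<N. s k \<bullet> (g k - z))
      \<le> (\<Sum>k<N. (d k - d (Suc k)) * sqrt (Suc k)) / (2 * gam)
         + gam * L\<^sup>2 / 2 * (\<Sum>k<N. 1 / sqrt (Suc k))"
    using sum_mono[where K = "{..<N}", OF regret_step]
    by (simp add: sum.distrib sum_divide_distrib sum_distrib_left)
  also have "\<dots> \<le> D\<^sup>2 * sqrt N / (2 * gam) + gam * L\<^sup>2 / 2 * (2 * sqrt N)"
  proof (intro add_mono divide_right_mono mult_left_mono)
    have "(\<Sum>k<N. (d k - d (Suc k)) * sqrt (Suc k)) \<le> (D\<^sup>2 - d N) * sqrt N"
      by (rule sum_diff_mult_incseq_le[where t = "\<lambda>k. sqrt k"]) (use d_nonneg d_le in auto)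
    also have "\<dots> \<le> D\<^sup>2 * sqrt N"
      using d_nonneg[of N] by (simp add: algebra_simps)
    finally show "(\<Sum>k<N. (d k - d (Suc k)) * sqrt (Suc k)) \<le> D\<^sup>2 * sqrt N" .
  qed (use gam sum_inverse_sqrt_le in auto)
  also have "\<dots> = (D\<^sup>2 / (2 * gam) + gam * L\<^sup>2) * sqrt N"
    by (simp add: algebra_simps)
  finally show ?thesis .
qed

lemma psgd_in:
  assumes "closed C" "g0 \<in> C"
  shows "psgd assign w C g0 gamma1 b xs k \<in> C"
  using assms by (cases k) (auto intro!: closest_point_in_set)

lemma psgd_cong:
  assumes "\<And>i. 1 \<le> i \<Longrightarrow> i \<le> k \<Longrightarrow> xs i = xs' i"
  shows "psgd assign w C g0 gamma1 b xs k = psgd assign w C g0 gamma1 b xs' k"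
  using assms by (induction k) auto

lemma psgd_regret:
  fixes w :: "real^'m::finite"
  assumes C: "convex C" "closed C" "bounded C" and g0: "g0 \<in> C" and z: "z \<in> C"
    and w: "\<forall>i. 0 \<le> w $ i" "(\<Sum>i\<in>UNIV. w $ i) = 1"
  shows "(\<Sum>k<N. sgrad assign w (psgd assign w C g0 (diameter C / (2 * sqrt 2)) (1/2) xs k) (xs (Suc k))
            \<bullet> (psgd assign w C g0 (diameter C / (2 * sqrt 2)) (1/2) xs k - z))
         \<le> 2 * sqrt 2 * diameter C * sqrt N"
    (is "(\<Sum>k<N. ?s k \<bullet> (?g k - z)) \<le> _")
proof -
  define D where "D = diameter C"
  have dist_le: "norm (?g k - z) \<le> D" for k
    using diameter_bounded_bound[OF C(3) psgd_in[OF C(2) g0] z] by (simp add: D_def dist_norm)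
  show ?thesis
  proof (cases "D = 0")
    case True
    then show ?thesis using dist_le by (simp add: D_def)
  next
    case False
    define gam where "gam = D / (2 * sqrt 2)"
    have gam: "0 < gam"
      using False diameter_ge_0[OF C(3)] by (simp add: gam_def D_def)
    have "(\<Sum>k<N. ?s k \<bullet> (?g k - z)) \<le> (D\<^sup>2 / (2 * gam) + gam * (sqrt 2)\<^sup>2) * sqrt N"
    proof (rule projected_subgradient_regret[OF dist_le _ gam])
      show "norm (?s k) \<le> sqrt 2" for k
        unfolding sgrad_eq_axis by (rule norm_axis_minus_prob_vector_le[OF w])
      fix k
      let ?x = "?g k - (gam / sqrt (Suc k)) *\<^sub>R ?s k"
      have "?g (Suc k) = closest_point C ?x"
        by (simp add: gam_def D_def powr_minus_divide powr_half_sqrt)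
      then have "dist (?g (Suc k)) z = dist (closest_point C ?x) (closest_point C z)"
        by (simp add: closest_point_self[OF z])
      also have "\<dots> \<le> dist ?x z"
        using C g0 by (intro closest_point_lipschitz) auto
      finally show "norm (?g (Suc k) - z) \<le> norm (?x - z)"
        by (simp add: dist_norm)
    qed
    also have "\<dots> = (3 / 2) * sqrt 2 * D * sqrt N"
      using False by (simp add: gam_def field_simps power2_eq_square)
    also have "\<dots> \<le> 2 * sqrt 2 * D * sqrt N"
      using diameter_ge_0[OF C(3)] by (intro mult_right_mono) (auto simp: D_def)
    finally show ?thesis by (simp add: D_def)
  qed
qed

lemma convex_psgd_avg_le:
  assumes "convex_on UNIV f"
  shows "f (psgd_avg assign w C g0 gamma1 b xs n)
    \<le> (\<Sum>k\<le>n. f (psgd assign w C g0 gamma1 b xs k)) / (n + 1)"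
proof -
  have "f (\<Sum>k\<le>n. (1 / (n + 1)) *\<^sub>R psgd assign w C g0 gamma1 b xs k)
      \<le> (\<Sum>k\<le>n. (1 / (n + 1)) * f (psgd assign w C g0 gamma1 b xs k))"
    using assms by (intro convex_on_sum) auto
  then show ?thesis
    by (simp add: psgd_avg_def atLeast0AtMost scaleR_sum_right sum_divide_distrib)
qed

lemma sgrad_pair_measurable:
  assumes "(\<lambda>p. assign (fst p) (snd p)) \<in> measurable (borel \<Otimes>\<^sub>M borel) (count_space UNIV)"
  shows "(\<lambda>p. sgrad assign w (fst p) (snd p)) \<in> borel_measurable (borel \<Otimes>\<^sub>M borel)"
  using measurable_comp[OF assms, of "\<lambda>j. axis j 1 - w"] by (simp add: comp_def sgrad_eq_axis)

lemma psgd_measurable: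
  fixes assign :: "real^'m::finite \<Rightarrow> 'a::topological_space \<Rightarrow> 'm"
  assumes assign: "(\<lambda>p. assign (fst p) (snd p)) \<in> measurable (borel \<Otimes>\<^sub>M borel) (count_space UNIV)"
    and C: "convex C" "closed C" "C \<noteq> {}"
    and "k \<le> j"
  shows "(\<lambda>xs. psgd assign w C g0 gamma1 b xs k)
    \<in> borel_measurable (PiM {1..j} (\<lambda>_. borel :: 'a measure))"
  using \<open>k \<le> j\<close>
proof (induction k)
  case 0 then show ?case by simp
next
  case (Suc k)
  have proj: "closest_point C \<in> borel_measurable borel"
    using continuous_on_closest_point[OF C] by (rule borel_measurable_continuous_onI)
  have step: "(\<lambda>p. closest_point C (fst p - r *\<^sub>R sgrad assign w (fst p) (snd p)))
      \<in> borel_measurable (borel \<Otimes>\<^sub>M borel)" for r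
  proof -
    have "(\<lambda>p. fst p - r *\<^sub>R sgrad assign w (fst p) (snd p)) \<in> borel_measurable (borel \<Otimes>\<^sub>M borel)"
      using sgrad_pair_measurable[OF assign] by measurable
    from measurable_compose[OF this proj] show ?thesis .
  qed
  have "(\<lambda>xs. (psgd assign w C g0 gamma1 b xs k, xs (Suc k)))
      \<in> measurable (PiM {1..j} (\<lambda>_. borel)) (borel \<Otimes>\<^sub>M (borel :: 'a measure))"
    using Suc by (intro measurable_Pair measurable_component_singleton) auto
  from measurable_compose[OF this step] show ?case by simp
qed

section \<open>Expectations of independent pairs\<close>

lemma (in prob_space) indep_var_compose_joint_distr:
  assumes indep: "indep_var S U T V"
    and F: "F \<in> measurable S S'" and G: "G \<in> measurable T T'"
  shows "distr M S' (\<lambda>\<omega>. F (U \<omega>)) \<Otimes>\<^sub>M distr M T' (\<lambda>\<omega>. G (V \<omega>))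
       = distr M (S' \<Otimes>\<^sub>M T') (\<lambda>\<omega>. (F (U \<omega>), G (V \<omega>)))"
proof -
  have U: "U \<in> measurable M S" and V: "V \<in> measurable M T"
    and joint: "distr M S U \<Otimes>\<^sub>M distr M T V = distr M (S \<Otimes>\<^sub>M T) (\<lambda>\<omega>. (U \<omega>, V \<omega>))"
    using indep unfolding indep_var_distribution_eq by auto
  interpret QV: prob_space "distr M T V" using V by (rule prob_space_distr)
  have "sigma_finite_measure (distr (distr M T V) T' G)"
    using G by (intro prob_space_imp_sigma_finite QV.prob_space_distr) simp
  then have "distr (distr M S U) S' F \<Otimes>\<^sub>M distr (distr M T V) T' G
      = distr (distr M (S \<Otimes>\<^sub>M T) (\<lambda>\<omega>. (U \<omega>, V \<omega>))) (S' \<Otimes>\<^sub>M T') (\<lambda>(x, y). (F x, G y))"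
    unfolding joint[symmetric] using F G by (intro pair_measure_distr) auto
  then show ?thesis
    using U V F G by (simp add: distr_distr measurable_Pair comp_def)
qed

lemma (in prob_space) expectation_eq_integral_of_product_law:
  fixes f :: "'b \<times> 'c \<Rightarrow> real"
  assumes U: "U \<in> measurable M S" and V: "V \<in> measurable M T"
    and joint: "distr M S U \<Otimes>\<^sub>M distr M T V = distr M (S \<Otimes>\<^sub>M T) (\<lambda>\<omega>. (U \<omega>, V \<omega>))"
    and distr_V: "distr M T V = mu"
    and f: "f \<in> borel_measurable (S \<Otimes>\<^sub>M T)"
    and bound: "\<And>p. \<bar>f p\<bar> \<le> B"
  shows "expectation (\<lambda>\<omega>. f (U \<omega>, V \<omega>)) = expectation (\<lambda>\<omega>. \<integral>x. f (U \<omega>, x) \<partial>mu)"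
proof -
  interpret QU: prob_space "distr M S U" using U by (rule prob_space_distr)
  interpret mu: prob_space mu unfolding distr_V[symmetric] using V by (rule prob_space_distr)
  interpret Q: pair_prob_space "distr M S U" mu ..
  have sets_mu: "sets mu = sets T"
    using distr_V by auto
  have f_Q: "f \<in> borel_measurable (distr M S U \<Otimes>\<^sub>M mu)"
    using f by (simp add: measurable_cong_sets[OF sets_pair_measure_cong[OF refl sets_mu] refl])
  have inner: "(\<lambda>u. \<integral>x. f (u, x) \<partial>mu) \<in> borel_measurable S"
    using f by (intro mu.borel_measurable_lebesgue_integral)
       (simp add: measurable_cong_sets[OF sets_pair_measure_cong[OF refl sets_mu] refl] case_prod_beta')
  have "expectation (\<lambda>\<omega>. f (U \<omega>, V \<omega>)) = integral\<^sup>L (distr M (S \<Otimes>\<^sub>M T) (\<lambda>\<omega>. (U \<omega>, V \<omega>))) f"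
    using U V f by (subst integral_distr) auto
  also have "\<dots> = integral\<^sup>L (distr M S U \<Otimes>\<^sub>M mu) f"
    by (simp add: joint[symmetric] distr_V)
  also have "\<dots> = (\<integral>u. (\<integral>x. f (u, x) \<partial>mu) \<partial>distr M S U)"
    using f_Q bound by (intro Q.integral_fst'[symmetric] Q.P.integrable_const_bound[where B = B]) auto
  also have "\<dots> = expectation (\<lambda>\<omega>. \<integral>x. f (U \<omega>, x) \<partial>mu)"
    using U inner by (rule integral_distr)
  finally show ?thesis .
qed

section \<open>Expected excess objective of PSGD\<close>

locale semidiscrete_psgd = prob_space P for P :: "'w measure" +
  fixes mu :: "'a::euclidean_space measure"
    and c :: "'a \<Rightarrow> 'a \<Rightarrow> real" and y :: "'m::finite \<Rightarrow> 'a" and w :: "real^'m"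
    and assign :: "real^'m \<Rightarrow> 'a \<Rightarrow> 'm"
    and C :: "(real^'m) set" and g0 gstar :: "real^'m"
    and X :: "nat \<Rightarrow> 'w \<Rightarrow> 'a"
  assumes w_nonneg: "\<forall>j. 0 \<le> w $ j" and w_sum: "(\<Sum>j\<in>UNIV. w $ j) = 1"
    and c_measurable: "\<forall>j. (\<lambda>x. c x (y j)) \<in> borel_measurable borel"
    and integrable_h_gstar: "integrable mu (h_fun c y w gstar)"
    and assign_cell: "\<forall>g x. x \<in> laguerre_cell c y g (assign g x)"
    and assign_measurable: "(\<lambda>p. assign (fst p) (snd p)) \<in> measurable (borel \<Otimes>\<^sub>M borel) (count_space UNIV)"
    and C: "convex C" "closed C" "bounded C"
    and g0_in: "g0 \<in> C" and gstar_in: "gstar \<in> C"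
    and X_indep: "indep_vars (\<lambda>_. borel) X {1..}"
    and X_distr: "\<forall>k\<ge>1. distr P borel (X k) = mu"
begin

abbreviation h where "h \<equiv> h_fun c y w"
abbreviation H where "H \<equiv> H_fun mu c y w"

lemma measurable_X: "1 \<le> k \<Longrightarrow> X k \<in> borel_measurable P"
  using X_indep by (auto simp: indep_vars_def)

lemma sets_mu: "sets mu = sets borel"
  using X_distr by (metis order_refl sets_distr)

sublocale M: prob_space mu
  using X_distr measurable_X[of 1] by (metis order_refl prob_space_distr)

lemma h_measurable[measurable (raw)]:
  assumes "f \<in> borel_measurable N" "g \<in> borel_measurable N"
  shows "(\<lambda>x. h (f x) (g x)) \<in> borel_measurable N"
proof -
  have [measurable]: "(\<lambda>x. c x (y j)) \<in> borel_measurable borel" for j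
    using c_measurable by auto
  note borel_measurable_nth[measurable] assms[measurable]
  show ?thesis
    unfolding h_fun_eq c_transform_def by measurable
qed

lemma sgrad_measurable[measurable (raw)]:
  assumes "f \<in> borel_measurable N" "g \<in> borel_measurable N"
  shows "(\<lambda>x. sgrad assign w (f x) (g x)) \<in> borel_measurable N"
  using measurable_compose[OF measurable_Pair[OF assms] sgrad_pair_measurable[OF assign_measurable]]
  by simp

lemma h_lipschitz: "\<bar>h g x - h g' x\<bar> \<le> sqrt 2 * norm (g - g')"
  using w_nonneg w_sum by (rule h_fun_lipschitz)

lemma integrable_h: "integrable mu (h g)"
proof -
  have "h g \<in> borel_measurable mu"
    by (simp add: measurable_cong_sets[OF sets_mu refl])
  then have "integrable mu (\<lambda>x. h g x - h gstar x)"
    by (intro M.integrable_const_bound[where B = "sqrt 2 * norm (g - gstar)"])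
       (use h_lipschitz integrable_h_gstar in auto)
  from Bochner_Integration.integrable_add[OF this integrable_h_gstar] show ?thesis
    by simp
qed

lemma H_diff: "H g - H g' = (\<integral>x. h g x - h g' x \<partial>mu)"
  unfolding H_fun_def by (rule Bochner_Integration.integral_diff[symmetric]) (rule integrable_h)+

lemma H_lipschitz: "\<bar>H g - H g'\<bar> \<le> sqrt 2 * norm (g - g')"
proof -
  have "\<bar>H g - H g'\<bar> \<le> (\<integral>x. \<bar>h g x - h g' x\<bar> \<partial>mu)"
    unfolding H_diff by (rule integral_abs_bound)
  also have "\<dots> \<le> (\<integral>x. sqrt 2 * norm (g - g') \<partial>mu)"
    using integrable_h h_lipschitz by (intro integral_mono) auto
  finally show ?thesis using M.prob_space by simp
qed

lemma H_measurable: "H \<in> borel_measurable borel"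
proof -
  have "(sqrt 2)-lipschitz_on UNIV H"
    using H_lipschitz by (intro lipschitz_onI) (auto simp: dist_norm dist_real_def)
  then show ?thesis
    by (intro borel_measurable_continuous_onI lipschitz_on_continuous_on)
qed

lemma convex_on_H: "convex_on UNIV H"
proof (rule convex_onI)
  fix t :: real and a b :: "real^'m"
  assume "0 < t" "t < 1"
  then have "(\<integral>x. h ((1 - t) *\<^sub>R a + t *\<^sub>R b) x \<partial>mu) \<le> (\<integral>x. (1 - t) * h a x + t * h b x \<partial>mu)"
    using integrable_h convex_on_h_fun[THEN convex_onD, of "t"]
    by (intro integral_mono) auto
  also have "\<dots> = (1 - t) * H a + t * H b"
    using integrable_h by (simp add: H_fun_def)
  finally show "H ((1 - t) *\<^sub>R a + t *\<^sub>R b) \<le> (1 - t) * H a + t * H b"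
    by (simp add: H_fun_def)
qed simp

lemma diameter_nonneg: "0 \<le> diameter C"
  using C(3) by (rule diameter_ge_0)

lemma dist_gstar_le: "g \<in> C \<Longrightarrow> norm (g - gstar) \<le> diameter C"
  using diameter_bounded_bound[OF C(3) _ gstar_in] by (simp add: dist_norm)

lemma h_diff_gstar_le: "g \<in> C \<Longrightarrow> \<bar>h g x - h gstar x\<bar> \<le> sqrt 2 * diameter C"
  using order_trans[OF h_lipschitz mult_left_mono[OF dist_gstar_le]] by simp

abbreviation iterate :: "nat \<Rightarrow> 'w \<Rightarrow> real^'m" where
  "iterate k \<omega> \<equiv> psgd assign w C g0 (diameter C / (2 * sqrt 2)) (1/2) (\<lambda>i. X i \<omega>) k"

lemma iterate_in: "iterate k \<omega> \<in> C"
  using C(2) g0_in by (rule psgd_in)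

lemma measurable_iterate[measurable]: "iterate k \<in> borel_measurable P"
  and iterate_sample_product_law:
    "distr P borel (iterate k) \<Otimes>\<^sub>M distr P borel (X (Suc k))
      = distr P (borel \<Otimes>\<^sub>M borel) (\<lambda>\<omega>. (iterate k \<omega>, X (Suc k) \<omega>))"
proof -
  let ?F = "\<lambda>xs. psgd assign w C g0 (diameter C / (2 * sqrt 2)) (1/2) xs k"
  have F: "?F \<in> borel_measurable (PiM {1..k} (\<lambda>_. borel))"
    using C(1,2) g0_in by (intro psgd_measurable[OF assign_measurable]) auto
  have F_restrict: "?F (restrict (\<lambda>i. X i \<omega>) {1..k}) = iterate k \<omega>" for \<omega>
    by (rule psgd_cong) auto
  have "(\<lambda>\<omega>. restrict (\<lambda>i. X i \<omega>) {1..k}) \<in> measurable P (PiM {1..k} (\<lambda>_. borel))"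
    using measurable_X by (intro measurable_restrict) auto
  from measurable_compose[OF this F] show "iterate k \<in> borel_measurable P"
    unfolding F_restrict .
  have "indep_var (PiM {1..k} (\<lambda>_. borel)) (\<lambda>\<omega>. restrict (\<lambda>i. X i \<omega>) {1..k})
      (PiM {Suc k} (\<lambda>_. borel)) (\<lambda>\<omega>. restrict (\<lambda>i. X i \<omega>) {Suc k})"
    by (rule indep_var_restrict[OF X_indep]) auto
  from indep_var_compose_joint_distr[OF this F measurable_component_singleton[of "Suc k"]]
  show "distr P borel (iterate k) \<Otimes>\<^sub>M distr P borel (X (Suc k))
      = distr P (borel \<Otimes>\<^sub>M borel) (\<lambda>\<omega>. (iterate k \<omega>, X (Suc k) \<omega>))"
    unfolding F_restrict by simp
qed

lemma expectation_H_iterate: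
  "expectation (\<lambda>\<omega>. H (iterate k \<omega>) - H gstar)
    = expectation (\<lambda>\<omega>. h (iterate k \<omega>) (X (Suc k) \<omega>) - h gstar (X (Suc k) \<omega>))"
proof -
  \<comment> \<open>truncated outside \<open>C\<close> to make the integrand bounded\<close>
  define f where "f p = (if fst p \<in> C then h (fst p) (snd p) - h gstar (snd p) else 0)" for p
  have "C \<in> sets borel"
    using C(2) by (rule borel_closed)
  then have "f \<in> borel_measurable (borel \<Otimes>\<^sub>M borel)"
    unfolding f_def by measurable
  moreover have "\<bar>f p\<bar> \<le> sqrt 2 * diameter C" for p
    using h_diff_gstar_le diameter_nonneg by (simp add: f_def)
  ultimately have "expectation (\<lambda>\<omega>. f (iterate k \<omega>, X (Suc k) \<omega>))
      = expectation (\<lambda>\<omega>. \<integral>x. f (iterate k \<omega>, x) \<partial>mu)"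
    using X_distr by (intro expectation_eq_integral_of_product_law[OF measurable_iterate
        measurable_X iterate_sample_product_law]) auto
  then show ?thesis
    using iterate_in by (simp add: f_def H_diff)
qed

lemma sgrad_inner_le: "g \<in> C \<Longrightarrow> \<bar>sgrad assign w g x \<bullet> (g - gstar)\<bar> \<le> sqrt 2 * diameter C"
  using Cauchy_Schwarz_ineq2[of "sgrad assign w g x" "g - gstar"]
    norm_axis_minus_prob_vector_le[OF w_nonneg w_sum, of "assign g x"] dist_gstar_le
  by (simp add: sgrad_eq_axis) (meson mult_mono norm_ge_zero order_trans real_sqrt_ge_zero zero_le_numeral)

lemma integrable_regret_term:
  "integrable P (\<lambda>\<omega>. sgrad assign w (iterate k \<omega>) (X (Suc k) \<omega>) \<bullet> (iterate k \<omega> - gstar))"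
  using sgrad_inner_le[OF iterate_in] measurable_X[of "Suc k"]
  by (intro integrable_const_bound[where B = "sqrt 2 * diameter C"]) auto

lemma integrable_H_iterate: "integrable P (\<lambda>\<omega>. H (iterate k \<omega>) - H gstar)"
proof (rule integrable_const_bound[where B = "sqrt 2 * diameter C"])
  show "AE \<omega> in P. norm (H (iterate k \<omega>) - H gstar) \<le> sqrt 2 * diameter C"
    using order_trans[OF H_lipschitz mult_left_mono[OF dist_gstar_le[OF iterate_in]]] by simp
  show "(\<lambda>\<omega>. H (iterate k \<omega>) - H gstar) \<in> borel_measurable P"
    using measurable_compose[OF measurable_iterate H_measurable] by measurable
qed

lemma expectation_H_iterate_le:
  "expectation (\<lambda>\<omega>. H (iterate k \<omega>) - H gstar)
    \<le> expectation (\<lambda>\<omega>. sgrad assign w (iterate k \<omega>) (X (Suc k) \<omega>) \<bullet> (iterate k \<omega> - gstar))"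
  unfolding expectation_H_iterate
proof (rule integral_mono[OF _ integrable_regret_term])
  show "integrable P (\<lambda>\<omega>. h (iterate k \<omega>) (X (Suc k) \<omega>) - h gstar (X (Suc k) \<omega>))"
    using h_diff_gstar_le[OF iterate_in] measurable_X[of "Suc k"]
    by (intro integrable_const_bound[where B = "sqrt 2 * diameter C"]) auto
  fix \<omega>
  let ?g = "iterate k \<omega>" and ?x = "X (Suc k) \<omega>"
  have "h ?g ?x + sgrad assign w ?g ?x \<bullet> (gstar - ?g) \<le> h gstar ?x"
    unfolding sgrad_eq_axis using assign_cell by (intro h_fun_subgradient) auto
  then show "h ?g ?x - h gstar ?x \<le> sgrad assign w ?g ?x \<bullet> (?g - gstar)"
    by (simp add: inner_diff_right)
qed

lemma expectation_regret_le:
  "expectation (\<lambda>\<omega>. \<Sum>k<N. sgrad assign w (iterate k \<omega>) (X (Suc k) \<omega>) \<bullet> (iterate k \<omega> - gstar))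
    \<le> 2 * sqrt 2 * diameter C * sqrt N"
proof (rule integral_le_const)
  show "integrable P (\<lambda>\<omega>. \<Sum>k<N. sgrad assign w (iterate k \<omega>) (X (Suc k) \<omega>) \<bullet> (iterate k \<omega> - gstar))"
    by (intro Bochner_Integration.integrable_sum integrable_regret_term)
  show "AE \<omega> in P. (\<Sum>k<N. sgrad assign w (iterate k \<omega>) (X (Suc k) \<omega>) \<bullet> (iterate k \<omega> - gstar))
      \<le> 2 * sqrt 2 * diameter C * sqrt N"
    using psgd_regret[OF C g0_in gstar_in w_nonneg w_sum, where xs = "\<lambda>i. X i _" and N = N]
    by (intro AE_I2)
qed

lemma excess_avg_le_mean_excess:
  "H (psgd_avg assign w C g0 (diameter C / (2 * sqrt 2)) (1/2) (\<lambda>k. X k \<omega>) n) - H gstar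
    \<le> (\<Sum>k<Suc n. H (iterate k \<omega>) - H gstar) / Suc n"
  using convex_psgd_avg_le[OF convex_on_H]
  by (simp add: lessThan_Suc_atMost sum_subtractf field_simps)

lemma expected_excess_le:
  assumes "1 \<le> n"
  shows "expectation (\<lambda>\<omega>.
      H (psgd_avg assign w C g0 (diameter C / (2 * sqrt 2)) (1/2) (\<lambda>k. X k \<omega>) n) - H gstar)
    \<le> 4 * sqrt 2 * diameter C / sqrt n"
    (is "expectation ?f \<le> _")
proof (cases "integrable P ?f")
  case False
  then show ?thesis using diameter_nonneg by (simp add: not_integrable_integral_eq)
next
  case True
  define N where "N = Suc n"
  let ?s = "\<lambda>k \<omega>. sgrad assign w (iterate k \<omega>) (X (Suc k) \<omega>) \<bullet> (iterate k \<omega> - gstar)"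
  have "expectation ?f \<le> expectation (\<lambda>\<omega>. (\<Sum>k<N. H (iterate k \<omega>) - H gstar) / N)"
    using True integrable_H_iterate excess_avg_le_mean_excess
    by (intro integral_mono) (auto simp: N_def)
  also have "\<dots> = (\<Sum>k<N. expectation (\<lambda>\<omega>. H (iterate k \<omega>) - H gstar)) / N"
    using integrable_H_iterate by (simp add: integral_sum)
  also have "\<dots> \<le> (\<Sum>k<N. expectation (?s k)) / N"
    by (intro divide_right_mono sum_mono expectation_H_iterate_le) auto
  also have "\<dots> = expectation (\<lambda>\<omega>. \<Sum>k<N. ?s k \<omega>) / N"
    using integrable_regret_term by (simp add: integral_sum)
  also have "\<dots> \<le> 2 * sqrt 2 * diameter C * sqrt N / N"
    by (intro divide_right_mono expectation_regret_le) auto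
  also have "\<dots> = 2 * sqrt 2 * diameter C / sqrt N"
    by (metis sqrt_divide_self_eq of_nat_0_le_iff times_divide_eq_right divide_inverse)
  also have "\<dots> \<le> 4 * sqrt 2 * diameter C / sqrt n"
    using assms diameter_nonneg by (intro frac_le) (auto simp: N_def)
  finally show ?thesis .
qed

end

lemma proj_set_eq_cbox:
  "proj_set c y K = cbox (- (\<chi> j. cost_sup c y K)) (\<chi> j. cost_sup c y K)"
proof -
  have "\<bar>t\<bar> \<le> r \<longleftrightarrow> - r \<le> t \<and> t \<le> r" for t r :: real
    by linarith
  then show ?thesis
    by (auto simp: proj_set_def mem_box_cart)
qed

theorem theorem3p2:
  fixes mu :: "'a::euclidean_space measure"
    and c :: "'a \<Rightarrow> 'a \<Rightarrow> real"
    and y :: "'m::finite \<Rightarrow> 'a"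
    and w :: "real^'m"
    and K :: "'a set"
    and gstar g0 :: "real^'m"
    and assign :: "real^'m \<Rightarrow> 'a \<Rightarrow> 'm"
    and P :: "'w measure"
    and X :: "nat \<Rightarrow> 'w \<Rightarrow> 'a"
    and n :: nat
  assumes mu_prob: "prob_space mu" and mu_sets: "sets mu = sets borel"
    and w_pos: "\<forall>j. 0 < w $ j" and w_sum: "(\<Sum>j\<in>UNIV. w $ j) = 1"
    and c_nonneg: "\<forall>x z. 0 \<le> c x z"
    and c_meas: "\<forall>j. (\<lambda>x. c x (y j)) \<in> borel_measurable borel"
    and H_finite: "integrable mu (h_fun c y w gstar)"
    and gstar_min: "\<forall>g. H_fun mu c y w gstar \<le> H_fun mu c y w g"
    and K_compact: "compact K"
    and K_mass: "measure mu K \<ge> 1 - Min (range (($) w)) / 2"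
    and c_bdd_K: "bounded ((\<lambda>p. c (fst p) (y (snd p))) ` (K \<times> UNIV))"
    and gstar_C: "gstar \<in> proj_set c y K"
    and g0_C: "g0 \<in> proj_set c y K"
    and assign_cell: "\<forall>g x. x \<in> laguerre_cell c y g (assign g x)"
    and assign_meas: "(\<lambda>p. assign (fst p) (snd p)) \<in> measurable (borel \<Otimes>\<^sub>M borel) (count_space UNIV)"
    and P_prob: "prob_space P"
    and X_indep: "prob_space.indep_vars P (\<lambda>_. borel) X {1..}"
    and X_distr: "\<forall>k\<ge>1. distr P borel (X k) = mu"
    and n_pos: "n \<ge> 1"
  shows "prob_space.expectation P
           (\<lambda>\<omega>. H_fun mu c y w
                   (psgd_avg assign w (proj_set c y K) g0
                      (diameter (proj_set c y K) / (2 * sqrt 2)) (1/2) (\<lambda>k. X k \<omega>) n)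
                 - H_fun mu c y w gstar)
         \<le> 4 * sqrt 2 * diameter (proj_set c y K) / sqrt (real n)"
proof -
  have "convex (proj_set c y K)" "closed (proj_set c y K)" "bounded (proj_set c y K)"
    by (simp_all add: proj_set_eq_cbox convex_box closed_cbox bounded_cbox)
  moreover have "\<forall>j. 0 \<le> w $ j"
    using w_pos by (simp add: less_imp_le)
  ultimately interpret semidiscrete_psgd P mu c y w assign "proj_set c y K" g0 gstar X
    using P_prob w_sum c_meas H_finite assign_cell assign_meas gstar_C g0_C X_indep X_distr
    by (intro semidiscrete_psgd.intro semidiscrete_psgd_axioms.intro) assumption+
  show ?thesis
    using n_pos by (rule expected_excess_le)
qed

end
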